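(* Let $\alpha\ge 0$, $\mu\ge 0$, $n\in\mathbb{N}$ and $x\in[0,\infty)$. Then $$\Delta_1:=T_n(t-x;x)=\frac{2\alpha x^2}{n},\qquad \Delta_2:=T_n((t-x)^2;x)=\frac{1}{n^2}x\left(4x^3\alpha^2+4\alpha x+n\right)+\frac{2\mu x}{n}\frac{e_\mu(-nx)}{e_\mu(nx)},$$ where $T_n$ acts on the variable $t$.
   Context: For $\mu>-\tfrac12$ define $\gamma_\mu(2k)=\dfrac{2^{2k}k!\,\Gamma(k+\mu+1/2)}{\Gamma(\mu+1/2)}$ and $\gamma_\mu(2k+1)=\dfrac{2^{2k+1}k!\,\Gamma(k+\mu+3/2)}{\Gamma(\mu+1/2)}$, $k\ge0$; $e_\mu(x)=\sum_{k\ge0} x^k/\gamma_\mu(k)$; $\theta_k=0$ if $k$ is even and $\theta_k=1$ if $k$ is odd. Let $h_k^\mu(\xi,\alpha)=\gamma_\mu(k)\sum_{j=0}^{\lfloor k/2\rfloor}\dfrac{\alpha^j\xi^{k-2j}}{j!\,\gamma_\mu(k-2j)}$. For $\alpha\ge0,\mu\ge0$, $n\in\mathbb{N}$ and $x\in[0,\infty)$ define $$T_n(f;x)=\frac{1}{e^{\alpha x^2}e_\mu(nx)}\sum_{k=0}^\infty \frac{h_k^\mu(n,\alpha)}{\gamma_\mu(k)}x^k f\!\left(\frac{k+2\mu\theta_k}{n}\right).$$ *)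

theory Defs
  imports "HOL-Analysis.Analysis"
begin

definition gamma_mu :: "real \<Rightarrow> nat \<Rightarrow> real" where
  "gamma_mu \<mu> k =
     (if even k
      then 2 ^ k * fact (k div 2) * Gamma (real (k div 2) + \<mu> + 1/2) / Gamma (\<mu> + 1/2)
      else 2 ^ k * fact (k div 2) * Gamma (real (k div 2) + \<mu> + 3/2) / Gamma (\<mu> + 1/2))"

definition e_mu :: "real \<Rightarrow> real \<Rightarrow> real" where
  "e_mu \<mu> x = (\<Sum>k. x ^ k / gamma_mu \<mu> k)"

definition theta :: "nat \<Rightarrow> real" where
  "theta k = (if even k then 0 else 1)"

definition h_mu :: "real \<Rightarrow> nat \<Rightarrow> real \<Rightarrow> real \<Rightarrow> real" where
  "h_mu \<mu> k \<xi> \<alpha> = gamma_mu \<mu> k *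
     (\<Sum>j\<le>k div 2. \<alpha> ^ j * \<xi> ^ (k - 2 * j) / (fact j * gamma_mu \<mu> (k - 2 * j)))"

definition T_op :: "real \<Rightarrow> real \<Rightarrow> nat \<Rightarrow> (real \<Rightarrow> real) \<Rightarrow> real \<Rightarrow> real" where
  "T_op \<mu> \<alpha> n f x =
     (1 / (exp (\<alpha> * x ^ 2) * e_mu \<mu> (real n * x))) *
     (\<Sum>k. h_mu \<mu> k (real n) \<alpha> / gamma_mu \<mu> k * x ^ k *
            f ((real k + 2 * \<mu> * theta k) / real n))"

end

theory Submission
  imports Defs
begin

text \<open>Put \<open>z = \<alpha> x\<^sup>2\<close> and \<open>y = n x\<close>. The weight with which \<open>T\<^sub>n\<close> samples the
  \<open>k\<close>-th node is the Cauchy product of the coefficients of \<open>e\<^sup>z = \<Sum>\<^sub>j z\<^sup>j / j!\<close>, placed on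
  the even indices \<open>2j\<close>, and of \<open>e\<^sub>\<mu>(y) = \<Sum>\<^sub>m y\<^sup>m / \<gamma>\<^sub>\<mu>(m)\<close>; and the node \<open>k + 2\<mu>\<theta>\<^sub>k\<close>
  of an index \<open>k = 2j + m\<close> equals \<open>2j + (m + 2\<mu>\<theta>\<^sub>m)\<close>. So, as for the sum of two independent
  random variables, the first two moments of \<open>T\<^sub>n\<close> are assembled from those of the two
  factors. These follow by an index shift from \<open>(j+1)! = (j+1) j!\<close> and
  \<open>\<gamma>\<^sub>\<mu>(m+1) = (m + 1 + 2\<mu>\<theta>\<^sub>m\<^sub>+\<^sub>1) \<gamma>\<^sub>\<mu>(m)\<close>; the parity term \<open>\<theta>\<close> in the latter is what
  produces \<open>e\<^sub>\<mu>(-n x)\<close>.\<close>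

definition node :: "real \<Rightarrow> nat \<Rightarrow> real" where
  "node \<mu> k = real k + 2 * \<mu> * theta k"

lemma node_0 [simp]: "node \<mu> 0 = 0"
  by (simp add: node_def theta_def)

lemma node_Suc: "node \<mu> (Suc k) = node \<mu> k + 1 + 2 * \<mu> * (-1) ^ k"
  by (simp add: node_def theta_def)

lemma node_nonneg: "\<mu> \<ge> 0 \<Longrightarrow> node \<mu> k \<ge> 0"
  by (simp add: node_def theta_def)

lemma node_ge: "\<mu> \<ge> 0 \<Longrightarrow> node \<mu> k \<ge> real k"
  by (simp add: node_def theta_def)

lemma node_add_even:
  assumes "even i" "i \<le> k"
  shows "node \<mu> k = real i + node \<mu> (k - i)"
proof -
  have "even (k - i) \<longleftrightarrow> even k" using assms by auto
  then show ?thesis using assms by (simp add: node_def theta_def of_nat_diff)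
qed

lemma gamma_mu_0:
  assumes "\<mu> > -1/2"
  shows "gamma_mu \<mu> 0 = 1"
proof -
  have "Gamma (\<mu> + 1/2) > 0" by (rule Gamma_real_pos) (use assms in simp)
  then show ?thesis by (simp add: gamma_mu_def)
qed

lemma gamma_mu_Suc:
  assumes "\<mu> > -1/2"
  shows "gamma_mu \<mu> (Suc k) = node \<mu> (Suc k) * gamma_mu \<mu> k"
proof (cases "even k")
  case True
  then obtain q where k: "k = 2 * q" by blast
  have "Gamma (\<mu> + (real q + 1/2) + 1) = (\<mu> + (real q + 1/2)) * Gamma (\<mu> + (real q + 1/2))"
    by (rule Gamma_plus1) (use assms in \<open>auto elim!: nonpos_Ints_cases\<close>)
  then have "Gamma (\<mu> + (real q + 3/2)) = (\<mu> + (real q + 1/2)) * Gamma (\<mu> + (real q + 1/2))"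
    by (simp add: add_ac)
  moreover have "Suc k div 2 = q" "k div 2 = q" using k by auto
  ultimately show ?thesis
    using k by (simp add: gamma_mu_def node_def theta_def algebra_simps)
next
  case False
  then obtain q where k: "k = 2 * q + 1" by (blast elim: oddE)
  have "Suc k div 2 = Suc q" "k div 2 = q" using k by auto
  moreover have "Gamma (real (Suc q) + \<mu> + 1/2) = Gamma (real q + \<mu> + 3/2)"
    by (simp add: add_ac)
  ultimately show ?thesis
    using k by (simp add: gamma_mu_def node_def theta_def field_simps)
qed

lemma fact_le_gamma_mu: "\<mu> \<ge> 0 \<Longrightarrow> fact k \<le> gamma_mu \<mu> k"
proof (induction k)
  case 0
  then show ?case by (simp add: gamma_mu_0)
next
  case (Suc k)
  have "real (Suc k) * fact k \<le> node \<mu> (Suc k) * gamma_mu \<mu> k"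
    using Suc node_ge[of \<mu> "Suc k"] by (intro mult_mono) auto
  moreover have "gamma_mu \<mu> (Suc k) = node \<mu> (Suc k) * gamma_mu \<mu> k"
    using Suc.prems by (intro gamma_mu_Suc) simp
  ultimately show ?case unfolding fact_Suc by simp
qed

lemma gamma_mu_pos: "\<mu> \<ge> 0 \<Longrightarrow> gamma_mu \<mu> k > 0"
  by (meson fact_gt_zero fact_le_gamma_mu less_le_trans)

definition e_mu_term :: "real \<Rightarrow> real \<Rightarrow> nat \<Rightarrow> real" where
  "e_mu_term \<mu> y k = y ^ k / gamma_mu \<mu> k"

lemma e_mu_term_nonneg: "\<mu> \<ge> 0 \<Longrightarrow> y \<ge> 0 \<Longrightarrow> e_mu_term \<mu> y k \<ge> 0"
  using gamma_mu_pos[of \<mu> k] by (simp add: e_mu_term_def)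

lemma e_mu_sums:
  assumes "\<mu> \<ge> 0"
  shows "e_mu_term \<mu> y sums e_mu \<mu> y"
proof -
  have "norm (e_mu_term \<mu> y k) \<le> inverse (fact k) * \<bar>y\<bar> ^ k" for k
  proof -
    have "norm (e_mu_term \<mu> y k) = \<bar>y\<bar> ^ k / gamma_mu \<mu> k"
      using gamma_mu_pos[OF assms, of k] by (simp add: e_mu_term_def abs_divide power_abs)
    also have "\<dots> \<le> \<bar>y\<bar> ^ k / fact k"
      using fact_le_gamma_mu[OF assms, of k] gamma_mu_pos[OF assms, of k]
      by (intro divide_left_mono) auto
    finally show ?thesis by (simp add: divide_inverse mult.commute)
  qed
  then have "summable (e_mu_term \<mu> y)"
    by (intro summable_comparison_test[OF _ summable_exp[of "\<bar>y\<bar>"]]) auto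
  then show ?thesis by (simp add: e_mu_def e_mu_term_def[abs_def] summable_sums)
qed

lemma e_mu_ge_1:
  assumes "\<mu> \<ge> 0" "y \<ge> 0"
  shows "e_mu \<mu> y \<ge> 1"
proof -
  have "sum (e_mu_term \<mu> y) {0} \<le> suminf (e_mu_term \<mu> y)"
    using e_mu_sums[OF assms(1)] e_mu_term_nonneg[OF assms]
    by (intro sum_le_suminf) (auto simp: sums_iff)
  then have "e_mu_term \<mu> y 0 \<le> e_mu \<mu> y"
    using e_mu_sums[OF assms(1)] by (simp add: sums_iff)
  then show ?thesis using gamma_mu_0[of \<mu>] assms(1) by (simp add: e_mu_term_def)
qed

lemma node_e_mu_term_Suc:
  "\<mu> \<ge> 0 \<Longrightarrow> node \<mu> (Suc k) * e_mu_term \<mu> y (Suc k) = y * e_mu_term \<mu> y k"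
  using gamma_mu_Suc[of \<mu> k] gamma_mu_pos[of \<mu> k] node_ge[of \<mu> "Suc k"]
  by (simp add: e_mu_term_def)

lemma e_mu_node_moment_sums:
  assumes "\<mu> \<ge> 0"
  shows "(\<lambda>k. node \<mu> k * e_mu_term \<mu> y k) sums (y * e_mu \<mu> y)"
proof -
  have "(\<lambda>k. node \<mu> (k + 1) * e_mu_term \<mu> y (k + 1)) sums (y * e_mu \<mu> y)"
    using sums_mult[OF e_mu_sums[OF assms], of y] by (simp add: node_e_mu_term_Suc[OF assms])
  then show ?thesis by (subst (asm) sums_zero_iff_shift) auto
qed

lemma e_mu_node_sq_moment_sums:
  assumes "\<mu> \<ge> 0"
  shows "(\<lambda>k. node \<mu> k ^ 2 * e_mu_term \<mu> y k) sums
    (y * (y * e_mu \<mu> y + e_mu \<mu> y + 2 * \<mu> * e_mu \<mu> (-y)))"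
proof -
  have shift: "node \<mu> (Suc k) ^ 2 * e_mu_term \<mu> y (Suc k) =
      y * (node \<mu> k * e_mu_term \<mu> y k + e_mu_term \<mu> y k + 2 * \<mu> * e_mu_term \<mu> (-y) k)" for k
  proof -
    have "node \<mu> (Suc k) ^ 2 * e_mu_term \<mu> y (Suc k) = node \<mu> (Suc k) * (y * e_mu_term \<mu> y k)"
      by (simp add: power2_eq_square node_e_mu_term_Suc[OF assms] mult.assoc)
    also have "\<dots> = y * (node \<mu> k * e_mu_term \<mu> y k + e_mu_term \<mu> y k
        + 2 * \<mu> * e_mu_term \<mu> (-y) k)"
      unfolding node_Suc e_mu_term_def power_minus[of y k] by (simp add: algebra_simps)
    finally show ?thesis .
  qed
  have "(\<lambda>k. y * (node \<mu> k * e_mu_term \<mu> y k + e_mu_term \<mu> y k + 2 * \<mu> * e_mu_term \<mu> (-y) k))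
      sums (y * (y * e_mu \<mu> y + e_mu \<mu> y + 2 * \<mu> * e_mu \<mu> (-y)))"
    by (intro sums_mult sums_add e_mu_node_moment_sums e_mu_sums assms)
  then have "(\<lambda>k. node \<mu> (k + 1) ^ 2 * e_mu_term \<mu> y (k + 1)) sums
      (y * (y * e_mu \<mu> y + e_mu \<mu> y + 2 * \<mu> * e_mu \<mu> (-y)))"
    by (simp add: shift)
  then show ?thesis by (subst (asm) sums_zero_iff_shift) auto
qed

definition exp_even_term :: "real \<Rightarrow> nat \<Rightarrow> real" where
  "exp_even_term z i = (if even i then z ^ (i div 2) / fact (i div 2) else 0)"

lemma exp_even_term_nonneg: "z \<ge> 0 \<Longrightarrow> exp_even_term z i \<ge> 0"
  by (simp add: exp_even_term_def)

lemma exp_even_term_Suc_Suc: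
  "real (Suc (Suc i)) * exp_even_term z (Suc (Suc i)) = 2 * z * exp_even_term z i"
proof (cases "even i")
  case True
  then obtain j where i: "i = 2 * j" by blast
  have "2 * real (Suc j) * (z ^ Suc j / (real (Suc j) * fact j)) = 2 * z * (z ^ j / fact j)"
    by (simp del: of_nat_Suc)
  then have "real (Suc (Suc i)) * (z ^ Suc j / fact (Suc j)) = 2 * z * (z ^ j / fact j)"
    unfolding i fact_Suc by simp
  then show ?thesis using i by (simp add: exp_even_term_def)
next
  case False
  then show ?thesis by (simp add: exp_even_term_def)
qed

lemma exp_even_sums: "exp_even_term z sums exp z"
proof -
  have "(\<lambda>j. exp_even_term z (2 * j)) sums exp z"
    using exp_converges[of z] by (simp add: exp_even_term_def divide_inverse mult.commute)
  moreover have "exp_even_term z i = 0" if "i \<notin> range (\<lambda>j. 2 * j)" for i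
    using that by (auto simp: exp_even_term_def elim!: evenE)
  ultimately show ?thesis
    by (subst (asm) sums_mono_reindex) (auto simp: strict_mono_def)
qed

lemma exp_even_moment_sums: "(\<lambda>i. real i * exp_even_term z i) sums (2 * z * exp z)"
proof -
  have "(\<lambda>i. real (i + 2) * exp_even_term z (i + 2)) sums (2 * z * exp z)"
    using sums_mult[OF exp_even_sums, of "2 * z"] exp_even_term_Suc_Suc by simp
  then show ?thesis by (subst (asm) sums_zero_iff_shift) (auto simp: exp_even_term_def less_2_cases_iff)
qed

lemma exp_even_sq_moment_sums:
  "(\<lambda>i. real i ^ 2 * exp_even_term z i) sums (2 * z * (2 * z + 2) * exp z)"
proof -
  have shift: "real (i + 2) ^ 2 * exp_even_term z (i + 2) =
      2 * z * (real i * exp_even_term z i + 2 * exp_even_term z i)" for i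
  proof -
    have "real (i + 2) ^ 2 * exp_even_term z (i + 2) =
        real (i + 2) * (real (Suc (Suc i)) * exp_even_term z (Suc (Suc i)))"
      by (simp add: power2_eq_square)
    then show ?thesis by (simp only: exp_even_term_Suc_Suc) (simp add: algebra_simps)
  qed
  have "(\<lambda>i. 2 * z * (real i * exp_even_term z i + 2 * exp_even_term z i)) sums
      (2 * z * (2 * z * exp z + 2 * exp z))"
    by (intro sums_mult sums_add exp_even_moment_sums exp_even_sums)
  then have "(\<lambda>i. real (i + 2) ^ 2 * exp_even_term z (i + 2)) sums (2 * z * (2 * z + 2) * exp z)"
    by (simp only: shift) (simp add: algebra_simps)
  then show ?thesis by (subst (asm) sums_zero_iff_shift) (auto simp: exp_even_term_def less_2_cases_iff)
qed

lemma Cauchy_product_sums_nonneg: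
  fixes a b :: "nat \<Rightarrow> real"
  assumes "a sums A" "b sums B" "\<And>i. a i \<ge> 0" "\<And>j. b j \<ge> 0"
  shows "(\<lambda>k. \<Sum>i\<le>k. a i * b (k - i)) sums (A * B)"
proof -
  have "summable (\<lambda>i. norm (a i))" "summable (\<lambda>j. norm (b j))"
    using assms by (simp_all add: sums_summable)
  from Cauchy_product_sums[OF this] show ?thesis
    using assms(1,2) by (simp add: sums_iff)
qed

lemma Cauchy_product_moment_sums:
  fixes a b u v N :: "nat \<Rightarrow> real"
  assumes a: "a sums A0" "(\<lambda>i. u i * a i) sums A1" "(\<lambda>i. u i ^ 2 * a i) sums A2"
    and b: "b sums B0" "(\<lambda>j. v j * b j) sums B1" "(\<lambda>j. v j ^ 2 * b j) sums B2"
    and nonneg: "\<And>i. a i \<ge> 0" "\<And>j. b j \<ge> 0" "\<And>i. u i \<ge> 0" "\<And>j. v j \<ge> 0"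
    and additive: "\<And>i k. i \<le> k \<Longrightarrow> a i \<noteq> 0 \<Longrightarrow> N k = u i + v (k - i)"
  shows "(\<lambda>k. \<Sum>i\<le>k. a i * b (k - i)) sums (A0 * B0)"
    and "(\<lambda>k. N k * (\<Sum>i\<le>k. a i * b (k - i))) sums (A1 * B0 + A0 * B1)"
    and "(\<lambda>k. N k ^ 2 * (\<Sum>i\<le>k. a i * b (k - i))) sums (A2 * B0 + 2 * (A1 * B1) + A0 * B2)"
proof -
  have ua: "u i * a i \<ge> 0" "u i ^ 2 * a i \<ge> 0" and vb: "v j * b j \<ge> 0" "v j ^ 2 * b j \<ge> 0"
    for i j using nonneg by simp_all
  show "(\<lambda>k. \<Sum>i\<le>k. a i * b (k - i)) sums (A0 * B0)"
    by (rule Cauchy_product_sums_nonneg[OF a(1) b(1) nonneg(1,2)])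
  have split1: "N k * (a i * b (k - i)) = (u i * a i) * b (k - i) + a i * (v (k - i) * b (k - i))"
    if "i \<le> k" for i k
    by (cases "a i = 0") (simp_all add: additive[OF that] algebra_simps)
  have "(\<lambda>k. (\<Sum>i\<le>k. (u i * a i) * b (k - i)) + (\<Sum>i\<le>k. a i * (v (k - i) * b (k - i))))
      sums (A1 * B0 + A0 * B1)"
    by (intro sums_add Cauchy_product_sums_nonneg[OF a(2) b(1) ua(1) nonneg(2)]
        Cauchy_product_sums_nonneg[OF a(1) b(2) nonneg(1) vb(1)])
  then show "(\<lambda>k. N k * (\<Sum>i\<le>k. a i * b (k - i))) sums (A1 * B0 + A0 * B1)"
    by (simp add: sum_distrib_left split1 sum.distrib)
  have split2: "N k ^ 2 * (a i * b (k - i)) = (u i ^ 2 * a i) * b (k - i)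
      + 2 * ((u i * a i) * (v (k - i) * b (k - i))) + a i * (v (k - i) ^ 2 * b (k - i))"
    if "i \<le> k" for i k
    by (cases "a i = 0") (simp_all add: additive[OF that] power2_eq_square algebra_simps)
  have "(\<lambda>k. (\<Sum>i\<le>k. (u i ^ 2 * a i) * b (k - i))
      + 2 * (\<Sum>i\<le>k. (u i * a i) * (v (k - i) * b (k - i)))
      + (\<Sum>i\<le>k. a i * (v (k - i) ^ 2 * b (k - i)))) sums (A2 * B0 + 2 * (A1 * B1) + A0 * B2)"
    by (intro sums_add sums_mult Cauchy_product_sums_nonneg[OF a(3) b(1) ua(2) nonneg(2)]
        Cauchy_product_sums_nonneg[OF a(2) b(2) ua(1) vb(1)]
        Cauchy_product_sums_nonneg[OF a(1) b(3) nonneg(1) vb(2)])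
  then show "(\<lambda>k. N k ^ 2 * (\<Sum>i\<le>k. a i * b (k - i))) sums (A2 * B0 + 2 * (A1 * B1) + A0 * B2)"
    by (simp add: sum_distrib_left split2 sum.distrib)
qed

lemma sum_atMost_even_indices:
  fixes k :: nat
  shows "(\<Sum>i\<le>k. if even i then f i else 0) = (\<Sum>j\<le>k div 2. f (2 * j))"
proof -
  have image: "{i\<in>{..k}. even i} = (\<lambda>j. 2 * j) ` {..k div 2}"
    by (auto simp: image_iff elim!: evenE intro: exI[of _ "_ div 2"])
  have "(\<Sum>i\<le>k. if even i then f i else 0) = sum f {i\<in>{..k}. even i}"
    by (rule sum.inter_filter[symmetric]) simp
  also have "\<dots> = (\<Sum>j\<le>k div 2. f (2 * j))"
    by (rule sum.reindex_cong[OF _ image]) (auto simp: inj_on_def)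
  finally show ?thesis .
qed

lemma h_mu_weight_eq_Cauchy_product:
  assumes "\<mu> \<ge> 0"
  shows "h_mu \<mu> k \<xi> \<alpha> / gamma_mu \<mu> k * x ^ k =
    (\<Sum>i\<le>k. exp_even_term (\<alpha> * x\<^sup>2) i * e_mu_term \<mu> (\<xi> * x) (k - i))"
proof -
  have "h_mu \<mu> k \<xi> \<alpha> / gamma_mu \<mu> k * x ^ k =
      (\<Sum>j\<le>k div 2. \<alpha> ^ j * \<xi> ^ (k - 2 * j) / (fact j * gamma_mu \<mu> (k - 2 * j)) * x ^ k)"
    using gamma_mu_pos[OF assms, of k] by (simp add: h_mu_def sum_distrib_right)
  also have "\<dots> = (\<Sum>j\<le>k div 2. exp_even_term (\<alpha> * x\<^sup>2) (2 * j) * e_mu_term \<mu> (\<xi> * x) (k - 2 * j))"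
  proof (rule sum.cong[OF refl])
    fix j assume "j \<in> {..k div 2}"
    then have "x ^ k = x ^ (2 * j) * x ^ (k - 2 * j)"
      by (simp add: power_add[symmetric])
    then show "\<alpha> ^ j * \<xi> ^ (k - 2 * j) / (fact j * gamma_mu \<mu> (k - 2 * j)) * x ^ k =
        exp_even_term (\<alpha> * x\<^sup>2) (2 * j) * e_mu_term \<mu> (\<xi> * x) (k - 2 * j)"
      by (simp add: exp_even_term_def e_mu_term_def power_mult_distrib power_mult)
  qed
  also have "\<dots> = (\<Sum>i\<le>k. exp_even_term (\<alpha> * x\<^sup>2) i * e_mu_term \<mu> (\<xi> * x) (k - i))"
    by (subst sum_atMost_even_indices[symmetric]) (auto simp: exp_even_term_def intro: sum.cong)
  finally show ?thesis .
qed

lemma central_moment_sums: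
  fixes c N :: "nat \<Rightarrow> real"
  assumes "c sums S0" "(\<lambda>k. N k * c k) sums S1" "(\<lambda>k. N k ^ 2 * c k) sums S2"
  shows "(\<lambda>k. c k * (N k / d - x)) sums (S1 / d - x * S0)"
    and "(\<lambda>k. c k * (N k / d - x) ^ 2) sums (S2 / d\<^sup>2 - 2 * x * (S1 / d) + x\<^sup>2 * S0)"
proof -
  have "(\<lambda>k. N k * c k / d - x * c k) sums (S1 / d - x * S0)"
    by (intro sums_diff sums_divide sums_mult assms)
  then show "(\<lambda>k. c k * (N k / d - x)) sums (S1 / d - x * S0)"
    by (simp add: algebra_simps)
  have "(\<lambda>k. N k ^ 2 * c k / d\<^sup>2 - 2 * x * (N k * c k / d) + x\<^sup>2 * c k)
      sums (S2 / d\<^sup>2 - 2 * x * (S1 / d) + x\<^sup>2 * S0)"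
    by (intro sums_add sums_diff sums_divide sums_mult assms)
  then show "(\<lambda>k. c k * (N k / d - x) ^ 2) sums (S2 / d\<^sup>2 - 2 * x * (S1 / d) + x\<^sup>2 * S0)"
    by (simp add: power2_eq_square algebra_simps)
qed

lemma node_weight_moment_sums:
  assumes "\<mu> \<ge> 0" "z \<ge> 0" "y \<ge> 0"
  defines "c \<equiv> \<lambda>k. \<Sum>i\<le>k. exp_even_term z i * e_mu_term \<mu> y (k - i)"
  shows "c sums (exp z * e_mu \<mu> y)"
    and "(\<lambda>k. node \<mu> k * c k) sums (2 * z * exp z * e_mu \<mu> y + exp z * (y * e_mu \<mu> y))"
    and "(\<lambda>k. node \<mu> k ^ 2 * c k) sums (2 * z * (2 * z + 2) * exp z * e_mu \<mu> y
      + 2 * (2 * z * exp z * (y * e_mu \<mu> y))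
      + exp z * (y * (y * e_mu \<mu> y + e_mu \<mu> y + 2 * \<mu> * e_mu \<mu> (-y))))"
proof -
  have nonneg: "exp_even_term z i \<ge> 0" "e_mu_term \<mu> y j \<ge> 0" "real i \<ge> 0" "node \<mu> j \<ge> 0"
    for i j using assms by (simp_all add: exp_even_term_nonneg e_mu_term_nonneg node_nonneg)
  have additive: "node \<mu> k = real i + node \<mu> (k - i)" if "i \<le> k" "exp_even_term z i \<noteq> 0" for i k
    using that by (intro node_add_even) (auto simp: exp_even_term_def split: if_splits)
  note moments = Cauchy_product_moment_sums[OF exp_even_sums exp_even_moment_sums
      exp_even_sq_moment_sums e_mu_sums[OF assms(1)] e_mu_node_moment_sums[OF assms(1)]
      e_mu_node_sq_moment_sums[OF assms(1)] nonneg additive]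
  show "c sums (exp z * e_mu \<mu> y)"
    and "(\<lambda>k. node \<mu> k * c k) sums (2 * z * exp z * e_mu \<mu> y + exp z * (y * e_mu \<mu> y))"
    and "(\<lambda>k. node \<mu> k ^ 2 * c k) sums (2 * z * (2 * z + 2) * exp z * e_mu \<mu> y
      + 2 * (2 * z * exp z * (y * e_mu \<mu> y))
      + exp z * (y * (y * e_mu \<mu> y + e_mu \<mu> y + 2 * \<mu> * e_mu \<mu> (-y))))"
    unfolding c_def using moments by auto
qed

theorem lemma4:
  fixes \<alpha> \<mu> x :: real and n :: nat
  assumes "\<alpha> \<ge> 0" and "\<mu> \<ge> 0" and "n \<ge> 1" and "x \<ge> 0"
  shows "T_op \<mu> \<alpha> n (\<lambda>t. t - x) x= 2 * \<alpha> * x ^ 2 / real n \<and>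
         T_op \<mu> \<alpha> n (\<lambda>t. (t - x) ^ 2) x =
           x * (4 * x ^ 3 * \<alpha> ^ 2 + 4 * \<alpha> * x + real n) / (real n) ^ 2
           + (2 * \<mu> * x / real n) * (e_mu \<mu> (- (real n * x)) / e_mu \<mu> (real n * x))"
proof -
  define z y where "z = \<alpha> * x\<^sup>2" and "y = real n * x"
  define c where "c k = (\<Sum>i\<le>k. exp_even_term z i * e_mu_term \<mu> y (k - i))" for k
  have "z \<ge> 0" "y \<ge> 0" using assms by (simp_all add: z_def y_def)
  have T: "T_op \<mu> \<alpha> n f x = (\<Sum>k. c k * f (node \<mu> k / real n)) / (exp z * e_mu \<mu> y)" for f
    using h_mu_weight_eq_Cauchy_product[OF assms(2)]
    by (simp add: T_op_def c_def z_def y_def node_def mult.commute)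
  note central = central_moment_sums[OF node_weight_moment_sums[OF assms(2) \<open>z \<ge> 0\<close> \<open>y \<ge> 0\<close>,
      unfolded c_def[symmetric]], of "real n" x, THEN sums_unique, symmetric]
  have "e_mu \<mu> y \<noteq> 0" using e_mu_ge_1[OF assms(2) \<open>y \<ge> 0\<close>] by simp
  moreover have "real n \<noteq> 0" using assms(3) by simp
  ultimately have "T_op \<mu> \<alpha> n (\<lambda>t. t - x) x = (2 * z + y) / real n - x"
    and "T_op \<mu> \<alpha> n (\<lambda>t. (t - x) ^ 2) x = (2 * z * (2 * z + 2) + 4 * z * y + y * (y + 1)
      + 2 * \<mu> * y * (e_mu \<mu> (-y) / e_mu \<mu> y)) / (real n)\<^sup>2 - 2 * x * ((2 * z + y) / real n) + x\<^sup>2"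
    by (simp_all only: T central) (simp_all add: field_simps)
  moreover have "(2 * z + y) / real n - x = 2 * \<alpha> * x ^ 2 / real n"
    and "(2 * z * (2 * z + 2) + 4 * z * y + y * (y + 1) + 2 * \<mu> * y * (e_mu \<mu> (-y) / e_mu \<mu> y))
      / (real n)\<^sup>2 - 2 * x * ((2 * z + y) / real n) + x\<^sup>2 =
      x * (4 * x ^ 3 * \<alpha> ^ 2 + 4 * \<alpha> * x + real n) / (real n) ^ 2
      + (2 * \<mu> * x / real n) * (e_mu \<mu> (- y) / e_mu \<mu> y)"
    using \<open>real n \<noteq> 0\<close> by (simp_all add: z_def y_def field_simps power2_eq_square power3_eq_cube)
  ultimately show ?thesis by (simp add: y_def)
qed

end
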